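(* Let $1\le k<n$. The map $F_k$, defined on $S\in\Theta(k,2n)$ by $F_k(S)=((\lambda^{(1)}_i+\lambda^{(2)}_i)_{1\le i\le k};t)$ with $t=1$ if $S$ is assigned $\uparrow$, $t=2$ if $S$ is assigned $\downarrow$, and $t=0$ otherwise, is an injection $\Theta(k,2n)\to\tilde P(n-k,n)$.
   Context: Root system $D_n$: positive roots $e_a\pm e_b$ ($a<b$); simple roots $e_i-e_{i+1}$ ($i<n$), $e_{n-1}+e_n$; order $\alpha\le\beta$ iff $\beta-\alpha$ is a nonnegative integer combination of simple roots. Base region: roots $e_a\pm e_b$ with $a\le k<b$; its $i$-th double-tailed diamond consists of $e_{k+1-i}\pm e_b$, $b>k$. Top region: $e_a+e_b$, $a<b\le k$. For a set $S$, $\lambda^{(1)}_i$ = number of roots of $S$ in the $i$-th double-tailed diamond, $\lambda^{(2)}_i$ = number of roots of $S$ of the form $e_a+e_{k+1-i}$ with $a<k+1-i$; if $\lambda^{(1)}_i=n-k$ for some $i$, $S$ is assigned $\uparrow$ if it contains $e_{k+1-i}-e_n$ and $\downarrow$ if it contains $e_{k+1-i}+e_n$ (for such $i$). $\Theta(k,2n)$ is the set of subsets $S$ of the union of the two regions meeting each region in a lower order ideal of that region and such that, for each top root $e_a+e_b$, $e_a+e_b\in S$ whenever $S$ contains more than $2n-2k$ roots of the diamonds indexed by $a$ and $b$ (diamonds $k+1-a$, $k+1-b$) combined, and $e_a+e_b\notin S$ whenever fewer. $\tilde P(n-k,n)$ is the set of pairs $(\gamma;t)$ with $\gamma=(\gamma_1\ge\dots\ge\gamma_k\ge0)$,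 $\gamma_1\le 2n-1-k$, $\gamma_i>\gamma_{i+1}$ whenever $\gamma_i>n-k$, and $t=0$ if no part of $\gamma$ equals $n-k$, $t\in\{1,2\}$ otherwise. *)

theory Defs
  imports Main
begin

text \<open>Vectors of Z^n are modelled as functions nat => int (coordinates 1..n, zero elsewhere).\<close>

definition ev :: "nat \<Rightarrow> nat \<Rightarrow> int" where
  "ev a = (\<lambda>j. if j = a then 1 else 0)"

definition rminus :: "nat \<Rightarrow> nat \<Rightarrow> nat \<Rightarrow> int" where
  "rminus a b = (\<lambda>j. ev a j - ev b j)"

definition rplus :: "nat \<Rightarrow> nat \<Rightarrow> nat \<Rightarrow> int" where
  "rplus a b = (\<lambda>j. ev a j + ev b j)"

text \<open>Simple roots of D_n: e_i - e_{i+1} (1 <= i < n) and e_{n-1} + e_n (index n).\<close>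
definition simple_root :: "nat \<Rightarrow> nat \<Rightarrow> nat \<Rightarrow> int" where
  "simple_root n i = (if i < n then rminus i (Suc i) else rplus (n - 1) n)"

definition root_le :: "nat \<Rightarrow> (nat \<Rightarrow> int) \<Rightarrow> (nat \<Rightarrow> int) \<Rightarrow> bool" where
  "root_le n \<alpha> \<beta> = (\<exists>c :: nat \<Rightarrow> nat. \<forall>j.
      \<beta> j - \<alpha> j = (\<Sum>i\<in>{1..n}. int (c i) * simple_root n i j))"

definition lower_ideal :: "nat \<Rightarrow> (nat \<Rightarrow> int) set \<Rightarrow> (nat \<Rightarrow> int) set \<Rightarrow> bool" where
  "lower_ideal n R I = (I \<subseteq> R \<and> (\<forall>\<beta>\<in>I. \<forall>\<alpha>\<in>R. root_le n \<alpha> \<beta> \<longrightarrow> \<alpha> \<in> I))"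

definition base_region :: "nat \<Rightarrow> nat \<Rightarrow> (nat \<Rightarrow> int) set" where
  "base_region k n = {rminus a b | a b. 1 \<le> a \<and> a \<le> k \<and> k < b \<and> b \<le> n}
                   \<union> {rplus a b | a b. 1 \<le> a \<and> a \<le> k \<and> k < b \<and> b \<le> n}"

definition top_region :: "nat \<Rightarrow> (nat \<Rightarrow> int) set" where
  "top_region k = {rplus a b | a b. 1 \<le> a \<and> a < b \<and> b \<le> k}"

definition diamond_at :: "nat \<Rightarrow> nat \<Rightarrow> nat \<Rightarrow> (nat \<Rightarrow> int) set" where
  "diamond_at k n a = {rminus a b | b. k < b \<and> b \<le> n} \<union> {rplus a b | b. k < b \<and> b \<le> n}"

definition diamond :: "nat \<Rightarrow> nat \<Rightarrow> nat \<Rightarrow> (nat \<Rightarrow> int) set" where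
  "diamond k n i = diamond_at k n (k + 1 - i)"

definition lam1 :: "nat \<Rightarrow> nat \<Rightarrow> (nat \<Rightarrow> int) set \<Rightarrow> nat \<Rightarrow> nat" where
  "lam1 k n S i = card (S \<inter> diamond k n i)"

definition lam2 :: "nat \<Rightarrow> (nat \<Rightarrow> int) set \<Rightarrow> nat \<Rightarrow> nat" where
  "lam2 k S i = card {rplus a (k + 1 - i) | a. 1 \<le> a \<and> a < k + 1 - i \<and> rplus a (k + 1 - i) \<in> S}"

definition Theta :: "nat \<Rightarrow> nat \<Rightarrow> (nat \<Rightarrow> int) set set" where
  "Theta k n = {S. S \<subseteq> base_region k n \<union> top_region k
      \<and> lower_ideal n (base_region k n) (S \<inter> base_region k n)
      \<and> lower_ideal n (top_region k) (S \<inter> top_region k)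
      \<and> (\<forall>a b. 1 \<le> a \<and> a < b \<and> b \<le> k \<longrightarrow>
            (card (S \<inter> (diamond_at k n a \<union> diamond_at k n b)) > 2*n - 2*k \<longrightarrow> rplus a b \<in> S)
          \<and> (card (S \<inter> (diamond_at k n a \<union> diamond_at k n b)) < 2*n - 2*k \<longrightarrow> rplus a b \<notin> S))}"

text \<open>Arrow assignment: 1 = up, 2 = down, 0 = none.\<close>
definition arrow :: "nat \<Rightarrow> nat \<Rightarrow> (nat \<Rightarrow> int) set \<Rightarrow> nat" where
  "arrow k n S =
     (if \<exists>i\<in>{1..k}. lam1 k n S i = n - k \<and> rminus (k + 1 - i) n \<in> S then 1
      else if \<exists>i\<in>{1..k}. lam1 k n S i = n - k \<and> rplus (k + 1 - i) n \<in> S then 2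
      else 0)"

definition Fk :: "nat \<Rightarrow> nat \<Rightarrow> (nat \<Rightarrow> int) set \<Rightarrow> nat list \<times> nat" where
  "Fk k n S = (map (\<lambda>i. lam1 k n S i + lam2 k S i) [1..<k+1], arrow k n S)"

text \<open>\<open>Ptilde m n\<close> = P~(m,n); partitions have k = n - m parts, gamma_i = gamma ! (i-1).\<close>
definition Ptilde :: "nat \<Rightarrow> nat \<Rightarrow> (nat list \<times> nat) set" where
  "Ptilde m n = {(\<gamma>, t). length \<gamma> = n - m
      \<and> (\<forall>i. i + 1 < length \<gamma> \<longrightarrow> \<gamma> ! i \<ge> \<gamma> ! (i + 1))
      \<and> (\<forall>i<length \<gamma>. \<gamma> ! i \<le> 2*n - 1 - (n - m))
      \<and> (\<forall>i. i + 1 < length \<gamma> \<longrightarrow> \<gamma> ! i > m \<longrightarrow> \<gamma> ! i > \<gamma> ! (i + 1))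
      \<and> (if m \<in> set \<gamma> then t \<in> {1, 2} else t = 0)}"

end

theory Submission imports Defs begin

text \<open>
  Write \<open>a = k + 1 - i\<close>, so that the \<open>i\<close>-th part of \<open>F\<^sub>k(S)\<close> is the size of the diamond at
  \<open>a\<close> plus the number of top roots \<open>e\<^sub>c + e\<^sub>a\<close> in \<open>S\<close>. Both counts grow with \<open>a\<close> because \<open>S\<close>
  meets both regions in lower ideals, so the parts decrease; if two consecutive parts above
  \<open>n - k\<close> were equal, the top_root_threshold condition would put the top root \<open>e\<^sub>a\<^sub>-\<^sub>1 + e\<^sub>a\<close> into
  \<open>S\<close> and make the larger part strictly larger.

  For injectivity, the top_root_threshold condition recovers the diamond sizes from the parts by
  induction on \<open>a\<close>: a larger diamond at \<open>a\<close>, with equal diamonds below, forces at least as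
  many top roots into the column at \<open>a\<close> and hence a larger part. A lower ideal of a
  double-tailed diamond is a chain segment determined by its size, except for size \<open>n - k\<close>,
  where it contains exactly one of \<open>e\<^sub>a - e\<^sub>n\<close>, \<open>e\<^sub>a + e\<^sub>n\<close>; all such diamonds of \<open>S\<close> make the
  same choice, which is recorded by the arrow. The top column at \<open>a\<close> is an up-closed set of
  indices, hence determined by its size.
\<close>

section \<open>The root order\<close>

lemma root_le_refl: "root_le n \<alpha> \<alpha>"
  unfolding root_le_def by (rule exI[of _ "\<lambda>_. 0"]) simp

lemma root_le_trans:
  assumes "root_le n \<alpha> \<beta>" and "root_le n \<beta> \<gamma>"
  shows "root_le n \<alpha> \<gamma>"
proof -
  obtain c d where
    c: "\<And>j. \<beta> j - \<alpha> j = (\<Sum>i\<in>{1..n}. int (c i) * simple_root n i j)" and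
    d: "\<And>j. \<gamma> j - \<beta> j = (\<Sum>i\<in>{1..n}. int (d i) * simple_root n i j)"
    using assms unfolding root_le_def by blast
  have "\<gamma> j - \<alpha> j = (\<beta> j - \<alpha> j) + (\<gamma> j - \<beta> j)" for j
    by simp
  then have "\<gamma> j - \<alpha> j = (\<Sum>i\<in>{1..n}. int (c i + d i) * simple_root n i j)" for j
    using c[of j] d[of j] by (simp add: sum.distrib[symmetric] algebra_simps)
  then show ?thesis
    unfolding root_le_def by (rule exI[of _ "\<lambda>i. c i + d i", OF allI])
qed

lemma root_le_add_simple_root:
  assumes "1 \<le> i" "i \<le> n" and "\<And>j. \<beta> j = \<alpha> j + simple_root n i j"
  shows "root_le n \<alpha> \<beta>"
  unfolding root_le_def
proof (rule exI[of _ "\<lambda>x. if x = i then 1 else 0"], intro allI)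
  fix j
  have "(\<Sum>x\<in>{1..n}. int (if x = i then 1 else 0) * simple_root n x j)
      = (\<Sum>x\<in>{1..n}. if x = i then simple_root n x j else 0)"
    by (rule sum.cong) auto
  also have "\<dots> = simple_root n i j"
    using assms(1,2) by simp
  finally show "\<beta> j - \<alpha> j = (\<Sum>x\<in>{1..n}. int (if x = i then 1 else 0) * simple_root n x j)"
    using assms(3) by simp
qed

text \<open>\<open>e\<^sub>p - e\<^sub>q\<close> is the sum of the simple roots \<open>e\<^sub>i - e\<^sub>i\<^sub>+\<^sub>1\<close>, \<open>p \<le> i < q\<close>.\<close>

lemma root_le_add_ev_diff:
  assumes "1 \<le> p" "p \<le> q" "q \<le> n"
  shows "root_le n \<alpha> (\<lambda>j. \<alpha> j + ev p j - ev q j)"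
  using assms(2,3)
proof (induction q rule: dec_induct)
  case base
  then show ?case by (simp add: root_le_refl)
next
  case (step q)
  have "root_le n (\<lambda>j. \<alpha> j + ev p j - ev q j) (\<lambda>j. \<alpha> j + ev p j - ev (Suc q) j)"
    by (rule root_le_add_simple_root[of q]) (use step assms(1) in \<open>auto simp: simple_root_def rminus_def\<close>)
  moreover have "root_le n \<alpha> (\<lambda>j. \<alpha> j + ev p j - ev q j)"
    using step by simp
  ultimately show ?case
    using root_le_trans by blast
qed

lemma root_le_add_ev_diffI:
  assumes "1 \<le> p" "p \<le> q" "q \<le> n" and "\<And>j. \<beta> j = \<alpha> j + ev p j - ev q j"
  shows "root_le n \<alpha> \<beta>"
proof -
  have "\<beta> = (\<lambda>j. \<alpha> j + ev p j - ev q j)"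
    using assms(4) by auto
  with root_le_add_ev_diff[OF assms(1-3)] show ?thesis
    by simp
qed

text \<open>\<open>e\<^sub>x + e\<^sub>y = (e\<^sub>x - e\<^sub>n\<^sub>-\<^sub>1) + (e\<^sub>y - e\<^sub>n) + (e\<^sub>n\<^sub>-\<^sub>1 + e\<^sub>n)\<close>.\<close>

lemma root_le_add_ev_sumI:
  assumes "1 \<le> x" "x < n" "1 \<le> y" "y \<le> n" and "\<And>j. \<beta> j = \<alpha> j + ev x j + ev y j"
  shows "root_le n \<alpha> \<beta>"
proof -
  define \<alpha>1 where "\<alpha>1 = (\<lambda>j. \<alpha> j + ev x j - ev (n - 1) j)"
  define \<alpha>2 where "\<alpha>2 = (\<lambda>j. \<alpha>1 j + ev y j - ev n j)"
  have "root_le n \<alpha> \<alpha>1"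
    unfolding \<alpha>1_def by (rule root_le_add_ev_diff) (use assms in auto)
  moreover have "root_le n \<alpha>1 \<alpha>2"
    unfolding \<alpha>2_def by (rule root_le_add_ev_diff) (use assms in auto)
  moreover have "root_le n \<alpha>2 \<beta>"
    by (rule root_le_add_simple_root[of n])
      (use assms in \<open>auto simp: simple_root_def rplus_def \<alpha>2_def \<alpha>1_def\<close>)
  ultimately show ?thesis
    using root_le_trans by blast
qed

lemma rminus_inject:
  assumes "rminus a b = rminus c d" "a \<noteq> b" "c \<noteq> d"
  shows "a = c \<and> b = d"
proof -
  have "rminus c d a = 1"
    using assms(2) fun_cong[OF assms(1), of a] by (simp add: rminus_def ev_def)
  moreover have "rminus c d b = -1"
    using assms(2) fun_cong[OF assms(1), of b] by (simp add: rminus_def ev_def)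
  ultimately show ?thesis
    by (auto simp: rminus_def ev_def split: if_splits)
qed

lemma rplus_neq_0_imp: "rplus c d x \<noteq> 0 \<Longrightarrow> x = c \<or> x = d"
  by (auto simp: rplus_def ev_def split: if_splits)

lemma rplus_inject:
  assumes "rplus a b = rplus c d" "a < b" "c < d"
  shows "a = c \<and> b = d"
proof -
  have "rplus a b a \<noteq> 0" "rplus a b b \<noteq> 0" "rplus c d c \<noteq> 0" "rplus c d d \<noteq> 0"
    by (auto simp: rplus_def ev_def)
  then have "rplus c d a \<noteq> 0" "rplus c d b \<noteq> 0" "rplus a b c \<noteq> 0" "rplus a b d \<noteq> 0"
    using assms(1) by metis+
  then have "a \<in> {c, d}" "b \<in> {c, d}" "c \<in> {a, b}" "d \<in> {a, b}"
    using rplus_neq_0_imp by blast+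
  with assms(2,3) show ?thesis
    by auto
qed

lemma rminus_neq_rplus: "a \<noteq> b \<Longrightarrow> rminus a b \<noteq> rplus c d"
proof
  assume "a \<noteq> b" "rminus a b = rplus c d"
  then have "rplus c d b = rminus a b b"
    by simp
  then have "rplus c d b = -1"
    using \<open>a \<noteq> b\<close> by (simp add: rminus_def ev_def)
  then show False
    by (auto simp: rplus_def ev_def split: if_splits)
qed

lemma diamond_at_disjoint:
  assumes "a \<noteq> b" "a \<le> k" "b \<le> k"
  shows "diamond_at k n a \<inter> diamond_at k n b = {}"
proof -
  have "rminus a j \<noteq> rminus b j'" "rplus a j \<noteq> rplus b j'"
    "rminus a j \<noteq> rplus b j'" "rplus a j \<noteq> rminus b j'"
    if "k < j" "k < j'" for j j'
  proof -
    have "a < j" "b < j'"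
      using that assms by auto
    then show "rminus a j \<noteq> rminus b j'" "rplus a j \<noteq> rplus b j'"
      using assms(1) rminus_inject[of a j b j'] rplus_inject[of a j b j'] by auto
    show "rminus a j \<noteq> rplus b j'" "rplus a j \<noteq> rminus b j'"
      using \<open>a < j\<close> \<open>b < j'\<close> rminus_neq_rplus by (metis less_irrefl)+
  qed
  then show ?thesis
    unfolding diamond_at_def by blast
qed

lemma down_closed_subsets_comparable:
  fixes X Y :: "nat set"
  assumes "\<And>x y. x \<in> X \<Longrightarrow> lo < y \<Longrightarrow> y \<le> x \<Longrightarrow> y \<in> X"
    and "\<And>x y. x \<in> Y \<Longrightarrow> lo < y \<Longrightarrow> y \<le> x \<Longrightarrow> y \<in> Y"
    and "X \<subseteq> {lo<..}" "Y \<subseteq> {lo<..}"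
  shows "X \<subseteq> Y \<or> Y \<subseteq> X"
proof (rule ccontr)
  assume "\<not> (X \<subseteq> Y \<or> Y \<subseteq> X)"
  then obtain x y where "x \<in> X" "x \<notin> Y" "y \<in> Y" "y \<notin> X"
    by blast
  show False
  proof (cases "x \<le> y")
    case True
    then show False
      using assms(2)[of y x] assms(3) \<open>x \<in> X\<close> \<open>x \<notin> Y\<close> \<open>y \<in> Y\<close> by auto
  next
    case False
    then show False
      using assms(1)[of x y] assms(4) \<open>y \<in> Y\<close> \<open>y \<notin> X\<close> \<open>x \<in> X\<close> by auto
  qed
qed

lemma up_closed_subsets_comparable:
  fixes X Y :: "nat set"
  assumes "\<And>x y. x \<in> X \<Longrightarrow> x \<le> y \<Longrightarrow> y < hi \<Longrightarrow> y \<in> X"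
    and "\<And>x y. x \<in> Y \<Longrightarrow> x \<le> y \<Longrightarrow> y < hi \<Longrightarrow> y \<in> Y"
    and "X \<subseteq> {..<hi}" "Y \<subseteq> {..<hi}"
  shows "X \<subseteq> Y \<or> Y \<subseteq> X"
proof (rule ccontr)
  assume "\<not> (X \<subseteq> Y \<or> Y \<subseteq> X)"
  then obtain x y where "x \<in> X" "x \<notin> Y" "y \<in> Y" "y \<notin> X"
    by blast
  show False
  proof (cases "x \<le> y")
    case True
    then show False
      using assms(1)[of x y] assms(4) \<open>x \<in> X\<close> \<open>y \<in> Y\<close> \<open>y \<notin> X\<close> by auto
  next
    case False
    then show False
      using assms(2)[of y x] assms(3) \<open>x \<in> X\<close> \<open>x \<notin> Y\<close> \<open>y \<in> Y\<close> by auto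
  qed
qed

lemma comparable_card_eq_imp_eq:
  assumes "finite X" "finite Y" "X \<subseteq> Y \<or> Y \<subseteq> X" "card X = card Y"
  shows "X = Y"
  using assms(3)
proof
  assume "X \<subseteq> Y"
  then show "X = Y"
    using card_subset_eq[OF assms(2) _ assms(4)] by simp
next
  assume "Y \<subseteq> X"
  then show "X = Y"
    using card_subset_eq[OF assms(1) _ assms(4)[symmetric]] by simp
qed

lemma ex_reflect_atLeastAtMost:
  "(\<exists>i\<in>{1..k}. Q (k + 1 - i)) \<longleftrightarrow> (\<exists>a\<in>{1..k::nat}. Q a)"
proof
  assume "\<exists>a\<in>{1..k}. Q a"
  then obtain a where "a \<in> {1..k}" "Q a"
    by blast
  then show "\<exists>i\<in>{1..k}. Q (k + 1 - i)"
    by (intro bexI[of _ "k + 1 - a"]) auto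
qed force

lemma reflected_map_eq_imp:
  assumes "map (\<lambda>i. f (k + 1 - i)) [1..<k+1] = map (\<lambda>i. g (k + 1 - i)) [1..<k+1]"
    and "b \<in> {1..k}"
  shows "f b = g b"
proof -
  have "k + 1 - b \<in> set [1..<k+1]"
    using assms(2) by (auto simp del: upt_Suc)
  then have "f (k + 1 - (k + 1 - b)) = g (k + 1 - (k + 1 - b))"
    using assms(1) by (simp only: map_eq_conv)
  moreover have "k + 1 - (k + 1 - b) = b"
    using assms(2) by auto
  ultimately show ?thesis
    by simp
qed

section \<open>Elements of \<open>\<Theta>(k, 2n)\<close>\<close>

locale theta_element =
  fixes k n :: nat and S :: "(nat \<Rightarrow> int) set"
  assumes one_le_k: "1 \<le> k" and k_less_n: "k < n" and in_Theta: "S \<in> Theta k n"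
begin

definition minus_part :: "nat \<Rightarrow> nat set" where
  "minus_part a = {j. k < j \<and> j \<le> n \<and> rminus a j \<in> S}"

definition plus_part :: "nat \<Rightarrow> nat set" where
  "plus_part a = {j. k < j \<and> j \<le> n \<and> rplus a j \<in> S}"

definition top_part :: "nat \<Rightarrow> nat set" where
  "top_part b = {c. 1 \<le> c \<and> c < b \<and> rplus c b \<in> S}"

definition diamond_card :: "nat \<Rightarrow> nat" where
  "diamond_card a = card (minus_part a) + card (plus_part a)"

definition gamma_at :: "nat \<Rightarrow> nat" where
  "gamma_at b = diamond_card b + card (top_part b)"

lemma subset_regions: "S \<subseteq> base_region k n \<union> top_region k"
  using in_Theta by (simp add: Theta_def)

lemma base_lower_ideal:
  "\<beta> \<in> S \<Longrightarrow> \<beta> \<in> base_region k n \<Longrightarrow> \<alpha> \<in> base_region k n \<Longrightarrow> root_le n \<alpha> \<beta> \<Longrightarrow> \<alpha> \<in> S"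
  using in_Theta unfolding Theta_def lower_ideal_def by blast

lemma top_lower_ideal:
  "\<beta> \<in> S \<Longrightarrow> \<beta> \<in> top_region k \<Longrightarrow> \<alpha> \<in> top_region k \<Longrightarrow> root_le n \<alpha> \<beta> \<Longrightarrow> \<alpha> \<in> S"
  using in_Theta unfolding Theta_def lower_ideal_def by blast

lemma in_base_region:
  "1 \<le> a \<Longrightarrow> a \<le> k \<Longrightarrow> k < j \<Longrightarrow> j \<le> n \<Longrightarrow> rminus a j \<in> base_region k n \<and> rplus a j \<in> base_region k n"
  unfolding base_region_def by blast

lemma in_top_region: "1 \<le> c \<Longrightarrow> c < b \<Longrightarrow> b \<le> k \<Longrightarrow> rplus c b \<in> top_region k"
  unfolding top_region_def by blast

lemma minus_part_mono:
  assumes "1 \<le> c" "c \<le> b" "b \<le> k"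
  shows "minus_part c \<subseteq> minus_part b"
proof
  fix j
  assume "j \<in> minus_part c"
  then have j: "k < j" "j \<le> n" "rminus c j \<in> S"
    by (auto simp: minus_part_def)
  have "root_le n (rminus b j) (rminus c j)"
    by (rule root_le_add_ev_diffI[of c b]) (use assms k_less_n in \<open>auto simp: rminus_def\<close>)
  then show "j \<in> minus_part b"
    using base_lower_ideal[OF j(3)] in_base_region j assms by (auto simp: minus_part_def)
qed

lemma plus_part_mono:
  assumes "1 \<le> c" "c \<le> b" "b \<le> k"
  shows "plus_part c \<subseteq> plus_part b"
proof
  fix j
  assume "j \<in> plus_part c"
  then have j: "k < j" "j \<le> n" "rplus c j \<in> S"
    by (auto simp: plus_part_def)
  have "root_le n (rplus b j) (rplus c j)"
    by (rule root_le_add_ev_diffI[of c b]) (use assms k_less_n in \<open>auto simp: rplus_def\<close>)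
  then show "j \<in> plus_part b"
    using base_lower_ideal[OF j(3)] in_base_region j assms by (auto simp: plus_part_def)
qed

lemma top_part_mono:
  assumes "c \<in> top_part b'" "b' \<le> b" "b \<le> k"
  shows "c \<in> top_part b"
proof -
  have c: "1 \<le> c" "c < b'" "rplus c b' \<in> S"
    using assms by (auto simp: top_part_def)
  have "root_le n (rplus c b) (rplus c b')"
    by (rule root_le_add_ev_diffI[of b' b]) (use assms c k_less_n in \<open>auto simp: rplus_def\<close>)
  then show ?thesis
    using top_lower_ideal[OF c(3)] in_top_region c assms by (auto simp: top_part_def)
qed

lemma minus_part_down_closed:
  assumes "j \<in> minus_part a" "k < j'" "j' \<le> j" "1 \<le> a" "a \<le> k"
  shows "j' \<in> minus_part a"
proof -
  have j: "j \<le> n" "rminus a j \<in> S"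
    using assms by (auto simp: minus_part_def)
  have "root_le n (rminus a j') (rminus a j)"
    by (rule root_le_add_ev_diffI[of j' j]) (use assms j one_le_k in \<open>auto simp: rminus_def\<close>)
  then show ?thesis
    using base_lower_ideal[OF j(2)] in_base_region j assms by (auto simp: minus_part_def)
qed

lemma plus_part_up_closed:
  assumes "j \<in> plus_part a" "j \<le> j'" "j' \<le> n" "1 \<le> a" "a \<le> k"
  shows "j' \<in> plus_part a"
proof -
  have j: "k < j" "rplus a j \<in> S"
    using assms by (auto simp: plus_part_def)
  have "root_le n (rplus a j') (rplus a j)"
    by (rule root_le_add_ev_diffI[of j j']) (use assms j one_le_k in \<open>auto simp: rplus_def\<close>)
  then show ?thesis
    using base_lower_ideal[OF j(2)] in_base_region j assms by (auto simp: plus_part_def)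
qed

text \<open>\<open>e\<^sub>a - e\<^sub>x \<le> e\<^sub>a + e\<^sub>j\<close> unless \<open>x = j = n\<close>: the two middle roots of the diamond are incomparable.\<close>

lemma minus_part_if_plus_part:
  assumes "j \<in> plus_part a" "k < x" "x \<le> n" "x \<noteq> n \<or> j \<noteq> n" "1 \<le> a" "a \<le> k"
  shows "x \<in> minus_part a"
proof -
  have j: "k < j" "j \<le> n" "rplus a j \<in> S"
    using assms by (auto simp: plus_part_def)
  have "root_le n (rminus a x) (rplus a j)"
  proof (cases "x < n")
    case True
    show ?thesis
      by (rule root_le_add_ev_sumI[of x n j]) (use assms j True in \<open>auto simp: rplus_def rminus_def\<close>)
  next
    case False
    then have "j < n"
      using assms j by auto
    show ?thesis
      by (rule root_le_add_ev_sumI[of j n x]) (use assms j \<open>j < n\<close> in \<open>auto simp: rplus_def rminus_def\<close>)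
  qed
  then show ?thesis
    using base_lower_ideal[OF j(3)] in_base_region j assms by (auto simp: minus_part_def)
qed

lemma top_part_up_closed:
  assumes "c \<in> top_part b" "c \<le> c'" "c' < b" "b \<le> k"
  shows "c' \<in> top_part b"
proof -
  have c: "1 \<le> c" "rplus c b \<in> S"
    using assms by (auto simp: top_part_def)
  have "root_le n (rplus c' b) (rplus c b)"
    by (rule root_le_add_ev_diffI[of c c']) (use assms c k_less_n in \<open>auto simp: rplus_def\<close>)
  then show ?thesis
    using top_lower_ideal[OF c(2)] in_top_region c assms by (auto simp: top_part_def)
qed

lemma minus_part_subset: "minus_part a \<subseteq> {k<..n}"
  and plus_part_subset: "plus_part a \<subseteq> {k<..n}"
  and top_part_subset: "top_part b \<subseteq> {1..<b}"
  by (auto simp: minus_part_def plus_part_def top_part_def)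

lemma finite_minus_part: "finite (minus_part a)"
  and finite_plus_part: "finite (plus_part a)"
  and finite_top_part: "finite (top_part b)"
  using finite_subset[OF minus_part_subset] finite_subset[OF plus_part_subset]
    finite_subset[OF top_part_subset] by simp_all

lemma card_minus_part_le: "card (minus_part a) \<le> n - k"
  using card_mono[OF _ minus_part_subset] by simp

lemma card_plus_part_le: "card (plus_part a) \<le> n - k"
  using card_mono[OF _ plus_part_subset] by simp

lemma card_top_part_le: "card (top_part b) \<le> b - 1"
  using card_mono[OF _ top_part_subset] by simp

lemma card_Int_diamond_at:
  assumes "1 \<le> a" "a \<le> k"
  shows "card (S \<inter> diamond_at k n a) = diamond_card a"
proof -
  have "S \<inter> diamond_at k n a = rminus a ` minus_part a \<union> rplus a ` plus_part a"
    unfolding diamond_at_def minus_part_def plus_part_def by blast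
  moreover have "inj_on (rminus a) (minus_part a)"
    by (rule inj_onI) (use rminus_inject assms minus_part_subset in fastforce)
  moreover have "inj_on (rplus a) (plus_part a)"
    by (rule inj_onI) (use rplus_inject assms plus_part_subset in fastforce)
  moreover have "a \<noteq> j" if "j \<in> minus_part a" for j
    using minus_part_subset that assms by force
  then have "rminus a ` minus_part a \<inter> rplus a ` plus_part a = {}"
    using rminus_neq_rplus by blast
  ultimately show ?thesis
    unfolding diamond_card_def
    by (simp add: card_Un_disjoint finite_minus_part finite_plus_part card_image)
qed

lemma card_Int_diamonds:
  assumes "1 \<le> c" "c < b" "b \<le> k"
  shows "card (S \<inter> (diamond_at k n c \<union> diamond_at k n b)) = diamond_card c + diamond_card b"
proof -
  have "finite (diamond_at k n a)" for a
    unfolding diamond_at_def by simp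
  then have "card (S \<inter> (diamond_at k n c \<union> diamond_at k n b))
      = card (S \<inter> diamond_at k n c) + card (S \<inter> diamond_at k n b)"
    using diamond_at_disjoint[of c b] assms
    by (subst card_Un_disjoint[symmetric]) (auto simp: Int_Un_distrib)
  then show ?thesis
    using card_Int_diamond_at assms by simp
qed

lemma top_root_threshold:
  assumes "1 \<le> c" "c < b" "b \<le> k"
  shows "diamond_card c + diamond_card b > 2*n - 2*k \<Longrightarrow> rplus c b \<in> S"
    and "diamond_card c + diamond_card b < 2*n - 2*k \<Longrightarrow> rplus c b \<notin> S"
  using in_Theta assms unfolding Theta_def card_Int_diamonds[OF assms, symmetric] by blast+

lemma in_top_part_if_diamonds_large:
  assumes "1 \<le> c" "c < b" "b \<le> k" "diamond_card c + diamond_card b > 2*n - 2*k"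
  shows "c \<in> top_part b"
  using top_root_threshold(1)[OF assms] assms by (simp add: top_part_def)

lemma diamonds_large_if_in_top_part:
  assumes "c \<in> top_part b" "b \<le> k"
  shows "diamond_card c + diamond_card b \<ge> 2*n - 2*k"
proof -
  have "1 \<le> c" "c < b" "rplus c b \<in> S"
    using assms(1) by (auto simp: top_part_def)
  then show ?thesis
    using top_root_threshold(2) assms(2) by force
qed

lemma diamond_card_mono:
  assumes "1 \<le> c" "c \<le> b" "b \<le> k"
  shows "diamond_card c \<le> diamond_card b"
  unfolding diamond_card_def
  using card_mono[OF finite_minus_part minus_part_mono[OF assms]]
    card_mono[OF finite_plus_part plus_part_mono[OF assms]] by simp

lemma minus_part_eq_if_last:
  assumes "n \<in> minus_part a" "1 \<le> a" "a \<le> k"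
  shows "minus_part a = {k<..n}"
  using minus_part_subset minus_part_down_closed[OF assms(1) _ _ assms(2,3)] by fastforce

lemma last_in_plus_part:
  assumes "j \<in> plus_part a" "1 \<le> a" "a \<le> k"
  shows "n \<in> plus_part a"
  using assms plus_part_up_closed[OF assms(1) _ order.refl assms(2,3)] by (simp add: plus_part_def)

lemma diamond_card_gt_if_last_in_both:
  assumes "n \<in> minus_part a" "n \<in> plus_part a" "1 \<le> a" "a \<le> k"
  shows "diamond_card a > n - k"
proof -
  have "card (plus_part a) > 0"
    using assms(2) finite_plus_part card_gt_0_iff by blast
  then show ?thesis
    using minus_part_eq_if_last[OF assms(1,3,4)] by (simp add: diamond_card_def)
qed

lemma last_in_diamond_if_card_eq:
  assumes "diamond_card a = n - k" "1 \<le> a" "a \<le> k"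
  shows "n \<in> minus_part a \<or> n \<in> plus_part a"
proof (rule ccontr)
  assume last: "\<not> (n \<in> minus_part a \<or> n \<in> plus_part a)"
  then have "plus_part a = {}"
    using last_in_plus_part assms by blast
  then have "minus_part a = {k<..n}"
    using assms(1) card_subset_eq[OF _ minus_part_subset] by (simp add: diamond_card_def)
  then show False
    using last k_less_n by auto
qed

lemma diamonds_consistent:
  assumes "diamond_card a = n - k" "diamond_card a' = n - k"
    and "n \<in> plus_part a" "n \<in> minus_part a'"
    and "1 \<le> a" "a \<le> k" "1 \<le> a'" "a' \<le> k"
  shows False
proof (cases "a \<le> a'")
  case True
  then have "n \<in> plus_part a'"
    using plus_part_mono[of a a'] assms by auto
  then show False
    using diamond_card_gt_if_last_in_both[of a'] assms by simp
next
  case False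
  then have "n \<in> minus_part a"
    using minus_part_mono[of a' a] assms by auto
  then show False
    using diamond_card_gt_if_last_in_both[of a] assms by simp
qed

lemma lam1_eq: "i \<in> {1..k} \<Longrightarrow> lam1 k n S i = diamond_card (k + 1 - i)"
  unfolding lam1_def diamond_def by (rule card_Int_diamond_at) auto

lemma lam2_eq: "lam2 k S i = card (top_part (k + 1 - i))"
proof -
  let ?b = "k + 1 - i"
  have "{rplus c ?b |c. 1 \<le> c \<and> c < ?b \<and> rplus c ?b \<in> S} = (\<lambda>c. rplus c ?b) ` top_part ?b"
    unfolding top_part_def by blast
  moreover have "inj_on (\<lambda>c. rplus c ?b) (top_part ?b)"
    using rplus_inject top_part_subset by (fastforce intro!: inj_onI)
  ultimately show ?thesis
    unfolding lam2_def by (simp add: card_image)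
qed

lemma Fk_eq: "Fk k n S = (map (\<lambda>i. gamma_at (k + 1 - i)) [1..<k+1], arrow k n S)"
  unfolding Fk_def gamma_at_def by (auto simp: lam1_eq lam2_eq)

lemma arrow_in: "arrow k n S \<in> {0, 1, 2}"
  unfolding arrow_def by auto

lemma arrow_eq_1_iff: "arrow k n S = 1 \<longleftrightarrow> (\<exists>a\<in>{1..k}. diamond_card a = n - k \<and> n \<in> minus_part a)"
proof -
  have "(\<exists>i\<in>{1..k}. lam1 k n S i = n - k \<and> rminus (k + 1 - i) n \<in> S)
     \<longleftrightarrow> (\<exists>i\<in>{1..k}. diamond_card (k + 1 - i) = n - k \<and> n \<in> minus_part (k + 1 - i))"
    using lam1_eq k_less_n by (auto simp: minus_part_def)
  also have "\<dots> \<longleftrightarrow> (\<exists>a\<in>{1..k}. diamond_card a = n - k \<and> n \<in> minus_part a)"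
    by (rule ex_reflect_atLeastAtMost)
  finally show ?thesis
    unfolding arrow_def by auto
qed

lemma arrow_neq_0_iff: "arrow k n S \<noteq> 0 \<longleftrightarrow> (\<exists>a\<in>{1..k}. diamond_card a = n - k)"
proof -
  have "(\<exists>i\<in>{1..k}. lam1 k n S i = n - k \<and> rminus (k + 1 - i) n \<in> S)
      \<or> (\<exists>i\<in>{1..k}. lam1 k n S i = n - k \<and> rplus (k + 1 - i) n \<in> S)
     \<longleftrightarrow> (\<exists>i\<in>{1..k}. diamond_card (k + 1 - i) = n - k
            \<and> (n \<in> minus_part (k + 1 - i) \<or> n \<in> plus_part (k + 1 - i)))"
    using lam1_eq k_less_n by (auto simp: minus_part_def plus_part_def)
  also have "\<dots> \<longleftrightarrow> (\<exists>a\<in>{1..k}. diamond_card a = n - k \<and> (n \<in> minus_part a \<or> n \<in> plus_part a))"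
    by (rule ex_reflect_atLeastAtMost)
  also have "\<dots> \<longleftrightarrow> (\<exists>a\<in>{1..k}. diamond_card a = n - k)"
    using last_in_diamond_if_card_eq by (meson atLeastAtMost_iff)
  finally show ?thesis
    unfolding arrow_def by auto
qed

lemma arrow_eq_1_iff_last_in_minus_part:
  assumes "diamond_card a = n - k" "1 \<le> a" "a \<le> k"
  shows "arrow k n S = 1 \<longleftrightarrow> n \<in> minus_part a"
proof
  assume "arrow k n S = 1"
  then obtain a' where "a' \<in> {1..k}" "diamond_card a' = n - k" "n \<in> minus_part a'"
    using arrow_eq_1_iff by blast
  then show "n \<in> minus_part a"
    using diamonds_consistent[OF assms(1) _ _ _ assms(2,3)] last_in_diamond_if_card_eq[OF assms]
    by auto
next
  assume "n \<in> minus_part a"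
  then show "arrow k n S = 1"
    using arrow_eq_1_iff assms by auto
qed

section \<open>The parts of \<open>F\<^sub>k(S)\<close>\<close>

lemma gamma_at_mono:
  assumes "1 \<le> c" "c \<le> b" "b \<le> k"
  shows "gamma_at c \<le> gamma_at b"
proof -
  have "top_part c \<subseteq> top_part b"
    using top_part_mono[of _ c b] assms by blast
  then have "card (top_part c) \<le> card (top_part b)"
    by (rule card_mono[OF finite_top_part])
  then show ?thesis
    using diamond_card_mono[OF assms] by (simp add: gamma_at_def)
qed

lemma gamma_at_le:
  assumes "b \<le> k"
  shows "gamma_at b \<le> 2*n - 1 - k"
  using card_minus_part_le[of b] card_plus_part_le[of b] card_top_part_le[of b] assms one_le_k k_less_n
  by (simp add: gamma_at_def diamond_card_def)

lemma gamma_at_strict_mono: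
  assumes "2 \<le> b" "b \<le> k" "gamma_at b > n - k"
  shows "gamma_at (b - 1) < gamma_at b"
proof (rule ccontr)
  assume "\<not> gamma_at (b - 1) < gamma_at b"
  moreover have "diamond_card (b - 1) \<le> diamond_card b"
    by (rule diamond_card_mono) (use assms in auto)
  moreover have top_sub: "top_part (b - 1) \<subseteq> top_part b"
    using top_part_mono[of _ "b - 1" b] assms by auto
  moreover have "card (top_part (b - 1)) \<le> card (top_part b)"
    using card_mono[OF finite_top_part top_sub] .
  ultimately have same_diamond: "diamond_card (b - 1) = diamond_card b"
    and same_card: "card (top_part (b - 1)) = card (top_part b)"
    unfolding gamma_at_def by linarith+
  have "top_part (b - 1) = top_part b"
    using card_subset_eq[OF finite_top_part top_sub same_card] .
  then have not_in: "b - 1 \<notin> top_part b"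
    by (auto simp: top_part_def)
  have "1 \<le> b - 1" "b - 1 < b"
    using assms by auto
  then have "diamond_card b \<le> n - k"
    using in_top_part_if_diamonds_large[of "b - 1" b] not_in same_diamond assms(2) by linarith
  then have "top_part b \<noteq> {}"
    using assms(3) unfolding gamma_at_def by auto
  then obtain c where c: "c \<in> top_part b"
    by blast
  then have "c \<le> b - 1"
    by (auto simp: top_part_def)
  then have "b - 1 \<in> top_part b"
    using top_part_up_closed[OF c _ _ assms(2)] \<open>b - 1 < b\<close> by blast
  with not_in show False ..
qed

text \<open>For \<open>\<Rightarrow>\<close> take \<open>b\<close> itself; for \<open>\<Leftarrow>\<close> take the least \<open>a\<close> with a diamond of size \<open>n - k\<close>, whose top column is then empty.\<close>

lemma ex_gamma_at_eq_iff:
  "(\<exists>b\<in>{1..k}. gamma_at b = n - k) \<longleftrightarrow> (\<exists>a\<in>{1..k}. diamond_card a = n - k)"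
proof
  assume "\<exists>b\<in>{1..k}. gamma_at b = n - k"
  then obtain b where b: "1 \<le> b" "b \<le> k" "gamma_at b = n - k"
    by auto
  have "top_part b = {}"
  proof (rule ccontr)
    assume "top_part b \<noteq> {}"
    then obtain c where c: "c \<in> top_part b"
      by blast
    then have "1 \<le> c" "c < b"
      by (auto simp: top_part_def)
    then have "diamond_card b \<ge> n - k"
      using diamonds_large_if_in_top_part[OF c b(2)] diamond_card_mono[of c b] b by simp
    moreover have "card (top_part b) > 0"
      using c finite_top_part card_gt_0_iff by blast
    ultimately show False
      using b(3) by (simp add: gamma_at_def)
  qed
  then show "\<exists>a\<in>{1..k}. diamond_card a = n - k"
    using b by (auto simp: gamma_at_def)
next
  assume "\<exists>a\<in>{1..k}. diamond_card a = n - k"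
  then have ex: "\<exists>a. 1 \<le> a \<and> a \<le> k \<and> diamond_card a = n - k"
    by auto
  define a where "a = (LEAST a. 1 \<le> a \<and> a \<le> k \<and> diamond_card a = n - k)"
  have a: "1 \<le> a" "a \<le> k" "diamond_card a = n - k"
    using LeastI_ex[OF ex] unfolding a_def by auto
  have "top_part a = {}"
  proof (rule ccontr)
    assume "top_part a \<noteq> {}"
    then obtain c where c: "c \<in> top_part a"
      by blast
    then have c_bounds: "1 \<le> c" "c < a"
      by (auto simp: top_part_def)
    then have "diamond_card c = n - k"
      using diamonds_large_if_in_top_part[OF c a(2)] diamond_card_mono[of c a] a by simp
    then show False
      using not_less_Least[of c "\<lambda>a. 1 \<le> a \<and> a \<le> k \<and> diamond_card a = n - k"] c_bounds a
      unfolding a_def by simp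
  qed
  then show "\<exists>b\<in>{1..k}. gamma_at b = n - k"
    using a by (intro bexI[of _ a]) (auto simp: gamma_at_def)
qed

lemma Fk_in_Ptilde: "Fk k n S \<in> Ptilde (n - k) n"
proof -
  define \<gamma> where "\<gamma> = map (\<lambda>i. gamma_at (k + 1 - i)) [1..<k+1]"
  have len: "length \<gamma> = k"
    by (simp add: \<gamma>_def)
  have nth: "\<gamma> ! j = gamma_at (k - j)" if "j < k" for j
    using that by (simp add: \<gamma>_def del: upt_Suc)
  have nk: "n - (n - k) = k"
    using k_less_n by simp
  have decreasing: "\<gamma> ! i \<ge> \<gamma> ! (i + 1)" if "i + 1 < length \<gamma>" for i
  proof -
    have "gamma_at (k - (i + 1)) \<le> gamma_at (k - i)"
      by (rule gamma_at_mono) (use that len in auto)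
    then show ?thesis
      using that len nth by simp
  qed
  have bounded: "\<gamma> ! i \<le> 2*n - 1 - (n - (n - k))" if "i < length \<gamma>" for i
    using gamma_at_le[of "k - i"] that len nth nk by simp
  have strict: "\<gamma> ! i > \<gamma> ! (i + 1)" if "i + 1 < length \<gamma>" "\<gamma> ! i > n - k" for i
  proof -
    have "gamma_at (k - i - 1) < gamma_at (k - i)"
      by (rule gamma_at_strict_mono) (use that len nth in auto)
    moreover have "k - (i + 1) = k - i - 1"
      by simp
    ultimately show ?thesis
      using that len nth by simp
  qed
  have "set \<gamma> = (\<lambda>i. gamma_at (k + 1 - i)) ` {1..k}"
    unfolding \<gamma>_def by (simp add: atLeastLessThanSuc_atLeastAtMost del: upt_Suc)
  then have "n - k \<in> set \<gamma> \<longleftrightarrow> (\<exists>i\<in>{1..k}. gamma_at (k + 1 - i) = n - k)"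
    by (force simp: image_iff)
  also have "\<dots> \<longleftrightarrow> (\<exists>a\<in>{1..k}. diamond_card a = n - k)"
    using ex_reflect_atLeastAtMost[of k "\<lambda>b. gamma_at b = n - k"] ex_gamma_at_eq_iff by (rule trans)
  finally have arrow: "if n - k \<in> set \<gamma> then arrow k n S \<in> {1, 2} else arrow k n S = 0"
    using arrow_neq_0_iff arrow_in by auto
  show ?thesis
    unfolding Fk_eq \<gamma>_def[symmetric] Ptilde_def
    using len nk decreasing bounded strict arrow by auto
qed

end

section \<open>Injectivity\<close>

locale theta_pair = s: theta_element k n S + t: theta_element k n S' for k n S S'
begin

lemma swap: "theta_pair k n S' S"
  by (simp add: theta_pair_def s.theta_element_axioms t.theta_element_axioms)

lemma gamma_at_less_if_diamond_card_less:
  assumes "b \<le> k"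
    and below: "\<And>c. 1 \<le> c \<Longrightarrow> c < b \<Longrightarrow> s.diamond_card c = t.diamond_card c"
    and less: "s.diamond_card b < t.diamond_card b"
  shows "s.gamma_at b < t.gamma_at b"
proof -
  have top_sub: "s.top_part b \<subseteq> t.top_part b"
  proof
    fix c
    assume c: "c \<in> s.top_part b"
    then have "1 \<le> c" "c < b"
      by (auto simp: s.top_part_def)
    then show "c \<in> t.top_part b"
      using s.diamonds_large_if_in_top_part[OF c assms(1)] below less
        t.in_top_part_if_diamonds_large[of c b] assms(1) by simp
  qed
  have "card (s.top_part b) \<le> card (t.top_part b)"
    using card_mono[OF t.finite_top_part top_sub] .
  with less show ?thesis
    by (simp add: s.gamma_at_def t.gamma_at_def)
qed

lemma diamond_card_eq_if_gamma_at_eq: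
  assumes gamma: "\<And>b. 1 \<le> b \<Longrightarrow> b \<le> k \<Longrightarrow> s.gamma_at b = t.gamma_at b"
  shows "1 \<le> b \<Longrightarrow> b \<le> k \<Longrightarrow> s.diamond_card b = t.diamond_card b"
proof (induction b rule: less_induct)
  case (less b)
  then have below: "\<And>c. 1 \<le> c \<Longrightarrow> c < b \<Longrightarrow> s.diamond_card c = t.diamond_card c"
    by simp
  show ?case
  proof (rule linorder_cases[of "s.diamond_card b" "t.diamond_card b"])
    assume "s.diamond_card b < t.diamond_card b"
    then have "s.gamma_at b < t.gamma_at b"
      using gamma_at_less_if_diamond_card_less[OF less.prems(2) below] by blast
    with gamma[OF less.prems] show ?thesis
      by simp
  next
    assume "t.diamond_card b < s.diamond_card b"
    then have "t.gamma_at b < s.gamma_at b"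
      using theta_pair.gamma_at_less_if_diamond_card_less[OF swap less.prems(2)] below by metis
    with gamma[OF less.prems] show ?thesis
      by simp
  qed
qed

lemma top_part_eq_if_gamma_at_eq:
  assumes gamma: "\<And>b. 1 \<le> b \<Longrightarrow> b \<le> k \<Longrightarrow> s.gamma_at b = t.gamma_at b"
    and "1 \<le> b" "b \<le> k"
  shows "s.top_part b = t.top_part b"
proof (rule comparable_card_eq_imp_eq[OF s.finite_top_part t.finite_top_part])
  show "card (s.top_part b) = card (t.top_part b)"
    using gamma[OF assms(2,3)] diamond_card_eq_if_gamma_at_eq[OF gamma assms(2,3)]
    by (simp add: s.gamma_at_def t.gamma_at_def)
  show "s.top_part b \<subseteq> t.top_part b \<or> t.top_part b \<subseteq> s.top_part b"
    by (rule up_closed_subsets_comparable[where hi = b])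
      (use s.top_part_up_closed t.top_part_up_closed assms(3) in \<open>auto simp: s.top_part_def t.top_part_def\<close>)
qed

lemma minus_parts_comparable:
  assumes "1 \<le> a" "a \<le> k"
  shows "s.minus_part a \<subseteq> t.minus_part a \<or> t.minus_part a \<subseteq> s.minus_part a"
proof (rule down_closed_subsets_comparable[where lo = k])
  show "s.minus_part a \<subseteq> {k<..}" "t.minus_part a \<subseteq> {k<..}"
    using s.minus_part_subset t.minus_part_subset by fastforce+
qed (use assms s.minus_part_down_closed t.minus_part_down_closed in blast)+

lemma plus_parts_comparable:
  assumes "1 \<le> a" "a \<le> k"
  shows "s.plus_part a \<subseteq> t.plus_part a \<or> t.plus_part a \<subseteq> s.plus_part a"
proof (rule up_closed_subsets_comparable[where hi = "Suc n"])
  show "s.plus_part a \<subseteq> {..<Suc n}" "t.plus_part a \<subseteq> {..<Suc n}"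
    using s.plus_part_subset t.plus_part_subset by fastforce+
qed (use assms s.plus_part_up_closed t.plus_part_up_closed less_Suc_eq_le in blast)+

text \<open>Diamond ideals of equal size can only differ in the middle, at \<open>e\<^sub>a - e\<^sub>n\<close> versus \<open>e\<^sub>a + e\<^sub>n\<close>.\<close>

lemma middle_if_card_minus_part_less:
  assumes a: "1 \<le> a" "a \<le> k"
    and same: "s.diamond_card a = t.diamond_card a"
    and less: "card (s.minus_part a) < card (t.minus_part a)"
  shows "s.diamond_card a = n - k \<and> n \<notin> s.minus_part a \<and> n \<in> t.minus_part a"
proof -
  have "\<not> t.minus_part a \<subseteq> s.minus_part a"
    using less card_mono[OF s.finite_minus_part] by (meson not_le)
  then have minus_sub: "s.minus_part a \<subseteq> t.minus_part a"
    using minus_parts_comparable[OF a] by blast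
  have "card (t.plus_part a) < card (s.plus_part a)"
    using same less by (simp add: s.diamond_card_def t.diamond_card_def)
  then have "\<not> s.plus_part a \<subseteq> t.plus_part a"
    using card_mono[OF t.finite_plus_part] by (meson not_le)
  then obtain j where j: "j \<in> s.plus_part a" "j \<notin> t.plus_part a"
    by blast
  have s_minus_small: "card (s.minus_part a) < n - k"
    using less t.card_minus_part_le[of a] by simp
  then have "\<not> {k<..n} \<subseteq> s.minus_part a"
    using card_mono[OF s.finite_minus_part, of "{k<..n}"] by fastforce
  then have "j = n"
    using s.minus_part_if_plus_part[OF j(1) _ _ _ a] by auto
  then have t_plus: "t.plus_part a = {}"
    using t.last_in_plus_part[OF _ a] j(2) by blast
  have s_not_last: "n \<notin> s.minus_part a"
    using s.minus_part_eq_if_last[OF _ a] s_minus_small by auto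
  have "s.minus_part a \<noteq> t.minus_part a"
    using less by auto
  then obtain x where x: "x \<in> t.minus_part a" "x \<notin> s.minus_part a"
    using minus_sub by blast
  have "k < x" "x \<le> n"
    using x(1) t.minus_part_subset by force+
  then have "x = n"
    using s.minus_part_if_plus_part[OF j(1)[unfolded \<open>j = n\<close>] _ _ _ a] x(2) by blast
  with x have t_last: "n \<in> t.minus_part a"
    by simp
  then have "t.diamond_card a = n - k"
    using t.minus_part_eq_if_last[OF _ a] t_plus by (simp add: t.diamond_card_def)
  with same s_not_last t_last show ?thesis
    by simp
qed

lemma diamond_parts_eq:
  assumes a: "1 \<le> a" "a \<le> k"
    and same: "s.diamond_card a = t.diamond_card a"
    and middle: "s.diamond_card a = n - k \<Longrightarrow> n \<in> s.minus_part a \<longleftrightarrow> n \<in> t.minus_part a"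
  shows "s.minus_part a = t.minus_part a \<and> s.plus_part a = t.plus_part a"
proof -
  have "\<not> card (s.minus_part a) < card (t.minus_part a)"
    using middle_if_card_minus_part_less[OF a same] middle by blast
  moreover have "\<not> card (t.minus_part a) < card (s.minus_part a)"
    using theta_pair.middle_if_card_minus_part_less[OF swap a same[symmetric]] middle same by auto
  ultimately have card_minus: "card (s.minus_part a) = card (t.minus_part a)"
    by linarith
  then have "card (s.plus_part a) = card (t.plus_part a)"
    using same by (simp add: s.diamond_card_def t.diamond_card_def)
  with card_minus show ?thesis
    using comparable_card_eq_imp_eq minus_parts_comparable[OF a] plus_parts_comparable[OF a]
      s.finite_minus_part t.finite_minus_part s.finite_plus_part t.finite_plus_part by metis
qed

lemma subset_if_parts_eq:
  assumes "\<And>a. 1 \<le> a \<Longrightarrow> a \<le> k \<Longrightarrow>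
      s.minus_part a = t.minus_part a \<and> s.plus_part a = t.plus_part a \<and> s.top_part a = t.top_part a"
  shows "S \<subseteq> S'"
proof
  fix x
  assume x: "x \<in> S"
  then consider (base) a j where "1 \<le> a" "a \<le> k" "k < j" "j \<le> n" "x = rminus a j \<or> x = rplus a j"
    | (top) c b where "1 \<le> c" "c < b" "b \<le> k" "x = rplus c b"
    using s.subset_regions unfolding base_region_def top_region_def by blast
  then show "x \<in> S'"
  proof cases
    case base
    with x assms[of a] show ?thesis
      by (auto simp: s.minus_part_def t.minus_part_def s.plus_part_def t.plus_part_def)
  next
    case top
    with x assms[of b] show ?thesis
      by (auto simp: s.top_part_def t.top_part_def)
  qed
qed

lemma eq_if_Fk_eq:
  assumes "Fk k n S = Fk k n S'"
  shows "S = S'"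
proof -
  have gamma: "s.gamma_at b = t.gamma_at b" if "1 \<le> b" "b \<le> k" for b
    using assms that reflected_map_eq_imp[of s.gamma_at k t.gamma_at b]
    unfolding s.Fk_eq t.Fk_eq by simp
  have arrow: "arrow k n S = arrow k n S'"
    using assms unfolding s.Fk_eq t.Fk_eq by simp
  have "s.minus_part a = t.minus_part a \<and> s.plus_part a = t.plus_part a \<and> s.top_part a = t.top_part a"
    if a: "1 \<le> a" "a \<le> k" for a
  proof -
    have same: "s.diamond_card a = t.diamond_card a"
      using diamond_card_eq_if_gamma_at_eq[OF gamma a] .
    have "n \<in> s.minus_part a \<longleftrightarrow> n \<in> t.minus_part a" if "s.diamond_card a = n - k"
      using s.arrow_eq_1_iff_last_in_minus_part[OF that a]
        t.arrow_eq_1_iff_last_in_minus_part[OF that[unfolded same] a] arrow by simp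
    then show ?thesis
      using diamond_parts_eq[OF a same] top_part_eq_if_gamma_at_eq[OF gamma a] by simp
  qed
  then show ?thesis
    using subset_if_parts_eq theta_pair.subset_if_parts_eq[OF swap] by (metis subset_antisym)
qed

end

theorem lemma3p16:
  fixes k n :: nat
  assumes "1 \<le> k" and "k < n"
  shows "(\<forall>S\<in>Theta k n. Fk k n S \<in> Ptilde (n - k) n) \<and> inj_on (Fk k n) (Theta k n)"
proof
  show "\<forall>S\<in>Theta k n. Fk k n S \<in> Ptilde (n - k) n"
    using theta_element.Fk_in_Ptilde theta_element.intro[OF assms] by blast
  show "inj_on (Fk k n) (Theta k n)"
  proof (rule inj_onI)
    fix S S'
    assume "S \<in> Theta k n" "S' \<in> Theta k n" "Fk k n S = Fk k n S'"
    then show "S = S'"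
      using theta_pair.eq_if_Fk_eq theta_element.intro[OF assms]
      by (metis theta_pair.intro)
  qed
qed

end
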